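(* Fix a class table in which every class has arity $1$ except one distinguished class $Z$ of arity $0$, and consider the subtyping machine it describes. For all classes $C_1,\dots,C_m,D_1,\dots,D_n$ of arity $1$ ($m,n\ge 0$), we have $C_1 \dots C_m Z \le D_1 \dots D_n Z$ if and only if there is a halting run of the subtyping machine starting from the configuration $(C_1\dots C_m Z,\ D_1\dots D_n Z)$, i.e. a finite sequence of execution steps from this configuration to the halting configuration $\bullet$.
   Context: Types are built from type variables and classes: every type variable is a type, and if $C$ has arity $m$ and $t_1,\dots,t_m$ are types then $C t_1\dots t_m$ is a type. A class table is a finite set of inheritance rules $C x_1\dots x_m \lhd D t_1 \dots t_n$ ($m,n$ the arities of $C,D$; the variables of the $t_j$ among $x_1,\dots,x_m$); it induces a relation $\lhd$ on types by $t_L\sigma \lhd t_R\sigma$ for each rule $t_L \lhd t_R$ and each substitution $\sigma$ of types for variables; $\lhd^*$ is its reflexive transitive closure. Subtyping $\le$ is defined inductively by the rule: if $A t_1\dots t_m \lhd^* C t'_1\dots t'_n$ and $t''_i \le t'_i$ for all $i$, then $A t_1\dots t_m \le C t''_1\dots t''_n$. With all classes of arity 1 except $Z$ of arity 0, every ground type has the form $C_1 C_2 \dots C_m Z$ (meaning $C_1(C_2(\cdots C_m(Z)))$). The subtyping machine has as configurations the ordered pairs $(s, s')$ of such ground types (representing the query $s \le s'$; the paper writes $(C_1\dots C_mZ, D_1\dots D_nZ)$ as $Z C_m \dots C_1 \blacktriangleleft D_1\dots D_n Z$, or equivalently $Z D_n\dots D_1 \blacktriangleright C_1\dots C_m Z$),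 plus a special halting configuration $\bullet$. Its execution steps are: $(C_1\dots C_m Z,\ Z) \leadsto \bullet$ whenever $C_1\dots C_m Z \lhd^* Z$; and, for $n\ge1$, $(C_1\dots C_m Z,\ D_1 D_2\dots D_n Z) \leadsto (D_2\dots D_n Z,\ E_2 \dots E_p Z)$ whenever $C_1\dots C_m Z \lhd^* D_1 E_2 \dots E_p Z$. *)

theory Defs
  imports Main
begin

datatype 'c ty = TV nat | TC 'c "'c ty list"

definition arity :: "'c \<Rightarrow> 'c \<Rightarrow> nat" where
  "arity Z C = (if C = Z then 0 else 1)"

fun wf_ty :: "'c \<Rightarrow> 'c ty \<Rightarrow> bool" where
  "wf_ty Z (TV x) = True"
| "wf_ty Z (TC C ts) = (length ts = arity Z C \<and> (\<forall>t\<in>set ts. wf_ty Z t))"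

fun vars :: "'c ty \<Rightarrow> nat set" where
  "vars (TV x) = {x}"
| "vars (TC C ts) = (\<Union>t\<in>set ts. vars t)"

fun subst :: "(nat \<Rightarrow> 'c ty) \<Rightarrow> 'c ty \<Rightarrow> 'c ty" where
  "subst \<sigma> (TV x) = \<sigma> x"
| "subst \<sigma> (TC C ts) = TC C (map (subst \<sigma>) ts)"

definition is_rule :: "'c \<Rightarrow> 'c ty \<times> 'c ty \<Rightarrow> bool" where
  "is_rule Z r \<longleftrightarrow> (\<exists>C xs D ts. r = (TC C (map TV xs), TC D ts)
      \<and> distinct xs \<and> length xs = arity Z C
      \<and> wf_ty Z (TC D ts) \<and> vars (TC D ts) \<subseteq> set xs)"

definition class_table :: "'c \<Rightarrow> ('c ty \<times> 'c ty) set \<Rightarrow> bool" where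
  "class_table Z T \<longleftrightarrow> finite T \<and> (\<forall>r\<in>T. is_rule Z r)"

definition lhd :: "'c \<Rightarrow> ('c ty \<times> 'c ty) set \<Rightarrow> 'c ty \<Rightarrow> 'c ty \<Rightarrow> bool" where
  "lhd Z T s t \<longleftrightarrow> (\<exists>(l, r)\<in>T. \<exists>\<sigma>. (\<forall>x. wf_ty Z (\<sigma> x)) \<and> s = subst \<sigma> l \<and> t = subst \<sigma> r)"

inductive sub :: "'c \<Rightarrow> ('c ty \<times> 'c ty) set \<Rightarrow> 'c ty \<Rightarrow> 'c ty \<Rightarrow> bool" for Z T where
  sub_rule: "(lhd Z T)\<^sup>*\<^sup>* (TC A ts) (TC C ts') \<Longrightarrow> list_all2 (sub Z T) ts'' ts'
     \<Longrightarrow> sub Z T (TC A ts) (TC C ts'')"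

fun enc :: "'c \<Rightarrow> 'c list \<Rightarrow> 'c ty" where
  "enc Z [] = TC Z []"
| "enc Z (C # cs) = TC C [enc Z cs]"

text \<open>Subtyping machine. Configurations: Some (cs, ds) for the pair (enc cs, enc ds)
  (with all classes in cs, ds of arity 1), and None for the halting configuration.\<close>
inductive mstep :: "'c \<Rightarrow> ('c ty \<times> 'c ty) set \<Rightarrow> ('c list \<times> 'c list) option \<Rightarrow> ('c list \<times> 'c list) option \<Rightarrow> bool"
  for Z T where
  halt: "(lhd Z T)\<^sup>*\<^sup>* (enc Z cs) (enc Z []) \<Longrightarrow> mstep Z T (Some (cs, [])) None"
| move: "Z \<notin> set es \<Longrightarrow> (lhd Z T)\<^sup>*\<^sup>* (enc Z cs) (enc Z (D # es))
     \<Longrightarrow> mstep Z T (Some (cs, D # ds)) (Some (ds, es))"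

end

theory Submission
  imports Defs
begin

text \<open>Unfolding the subtyping rule once at the outermost class, \<open>C\<^sub>1\<dots>C\<^sub>m Z \<le> D\<^sub>1\<dots>D\<^sub>n Z\<close>
  holds iff \<open>C\<^sub>1\<dots>C\<^sub>m Z \<lhd>\<^sup>* D\<^sub>1 t'\<close> for some \<open>t'\<close> with \<open>D\<^sub>2\<dots>D\<^sub>n Z \<le> t'\<close> (or \<open>C\<^sub>1\<dots>C\<^sub>m Z \<lhd>\<^sup>* Z\<close>
  when \<open>n = 0\<close>). Inheritance rules instantiated with well-formed types map ground well-formed
  types to ground well-formed types, and these are exactly the \<open>E\<^sub>2\<dots>E\<^sub>p Z\<close>; so each unfolding
  is one step of the machine, and a derivation of the subtyping judgement is a halting run.\<close>

definition ground :: "'c \<Rightarrow> 'c ty \<Rightarrow> bool" where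
  "ground Z t \<longleftrightarrow> vars t = {} \<and> wf_ty Z t"

lemma vars_subst: "vars (subst \<sigma> t) = (\<Union>x\<in>vars t. vars (\<sigma> x))"
  by (induct t) auto

lemma wf_ty_subst: "wf_ty Z t \<Longrightarrow> (\<And>x. wf_ty Z (\<sigma> x)) \<Longrightarrow> wf_ty Z (subst \<sigma> t)"
  by (induct t) auto

lemma lhd_preserves_ground:
  assumes "class_table Z T" and "lhd Z T s t" and "ground Z s"
  shows "ground Z t"
proof -
  from assms(2) obtain l r \<sigma> where lr: "(l, r) \<in> T" and wf_\<sigma>: "\<And>x. wf_ty Z (\<sigma> x)"
    and s: "s = subst \<sigma> l" and t: "t = subst \<sigma> r"
    unfolding lhd_def by blast
  from assms(1) lr obtain C xs D ts where l: "l = TC C (map TV xs)" and r: "r = TC D ts"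
    and wf_r: "wf_ty Z (TC D ts)" and vars_r: "vars (TC D ts) \<subseteq> set xs"
    unfolding class_table_def is_rule_def by blast
  have "vars s = (\<Union>x\<in>set xs. vars (\<sigma> x))"
    unfolding s l vars_subst by simp
  with assms(3) have "\<forall>x\<in>set xs. vars (\<sigma> x) = {}"
    by (simp add: ground_def)
  with vars_r have "vars t = {}"
    unfolding t r vars_subst by blast
  moreover have "wf_ty Z t"
    unfolding t r using wf_r wf_\<sigma> by (rule wf_ty_subst)
  ultimately show ?thesis
    by (simp add: ground_def)
qed

lemma ground_enc: "Z \<notin> set es \<Longrightarrow> ground Z (enc Z es)"
  by (induct es) (auto simp: ground_def arity_def)

lemma ground_imp_enc: "ground Z t \<Longrightarrow> \<exists>es. Z \<notin> set es \<and> t = enc Z es"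
proof (induct t)
  case (TV x)
  then show ?case by (simp add: ground_def)
next
  case (TC C ts)
  show ?case
  proof (cases "C = Z")
    case True
    with TC.prems have "ts = []"
      by (simp add: ground_def arity_def)
    with True show ?thesis
      by (intro exI[of _ "[]"]) simp
  next
    case False
    with TC.prems obtain t1 where ts: "ts = [t1]"
      by (auto simp: ground_def arity_def length_Suc_conv)
    with TC.prems have "ground Z t1"
      by (simp add: ground_def)
    with TC.hyps ts obtain es where "Z \<notin> set es" "t1 = enc Z es"
      by auto
    with False ts show ?thesis
      by (intro exI[of _ "C # es"]) simp
  qed
qed

lemma lhd_rtranclp_enc_imp_enc:
  assumes "class_table Z T" and "(lhd Z T)\<^sup>*\<^sup>* (enc Z cs) t" and "Z \<notin> set cs"
  shows "\<exists>es. Z \<notin> set es \<and> t = enc Z es"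
proof -
  from assms(2) have "ground Z t"
  proof (induct rule: rtranclp_induct)
    case base
    show ?case using assms(3) by (rule ground_enc)
  next
    case (step s t)
    then show ?case using lhd_preserves_ground[OF assms(1)] by blast
  qed
  then show ?thesis by (rule ground_imp_enc)
qed

lemma halting_run_imp_sub:
  assumes "(mstep Z T)\<^sup>*\<^sup>* (Some (cs, ds)) None"
  shows "sub Z T (enc Z cs) (enc Z ds)"
proof -
  have "\<forall>cs ds. c = Some (cs, ds) \<longrightarrow> sub Z T (enc Z cs) (enc Z ds)"
    if "(mstep Z T)\<^sup>*\<^sup>* c None" for c
    using that
  proof (induct rule: converse_rtranclp_induct)
    case base
    show ?case by simp
  next
    case (step c c')
    show ?case
    proof (intro allI impI)
      fix cs ds
      assume c: "c = Some (cs, ds)"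
      obtain A ts where enc_cs: "enc Z cs = TC A ts"
        by (cases cs) auto
      from step(1)[unfolded c] show "sub Z T (enc Z cs) (enc Z ds)"
      proof (cases rule: mstep.cases)
        case halt
        then show ?thesis
          using sub_rule[of Z T A ts Z "[]" "[]"] enc_cs by simp
      next
        case (move es D ds')
        with step(3) have "sub Z T (enc Z ds') (enc Z es)"
          by simp
        with move enc_cs show ?thesis
          using sub_rule[of Z T A ts D "[enc Z es]" "[enc Z ds']"] by simp
      qed
    qed
  qed
  with assms show ?thesis by blast
qed

lemma sub_imp_halting_run:
  assumes ct: "class_table Z T"
    and "sub Z T (enc Z cs) (enc Z ds)" and "Z \<notin> set cs" and "Z \<notin> set ds"
  shows "(mstep Z T)\<^sup>*\<^sup>* (Some (cs, ds)) None"
proof -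
  have "\<forall>cs ds. s = enc Z cs \<longrightarrow> t = enc Z ds \<longrightarrow> Z \<notin> set cs \<longrightarrow> Z \<notin> set ds
          \<longrightarrow> (mstep Z T)\<^sup>*\<^sup>* (Some (cs, ds)) None"
    if "sub Z T s t" for s t
    using that
  proof (induct rule: sub.induct)
    case (sub_rule A ts C ts' ts'')
    show ?case
    proof (intro allI impI)
      fix cs ds
      assume s: "TC A ts = enc Z cs" and t: "TC C ts'' = enc Z ds"
        and cs_Z: "Z \<notin> set cs" and ds_Z: "Z \<notin> set ds"
      show "(mstep Z T)\<^sup>*\<^sup>* (Some (cs, ds)) None"
      proof (cases ds)
        case Nil
        with t have "C = Z" "ts'' = []" by simp_all
        with sub_rule(1,2) s have "(lhd Z T)\<^sup>*\<^sup>* (enc Z cs) (enc Z [])"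
          by simp
        with Nil show ?thesis
          by (blast intro: mstep.halt)
      next
        case (Cons D ds')
        with t have C: "C = D" and ts'': "ts'' = [enc Z ds']" by simp_all
        from sub_rule(2) ts'' obtain t' where ts': "ts' = [t']"
          and IH: "\<forall>cs es. enc Z ds' = enc Z cs \<longrightarrow> t' = enc Z es \<longrightarrow> Z \<notin> set cs
                    \<longrightarrow> Z \<notin> set es \<longrightarrow> (mstep Z T)\<^sup>*\<^sup>* (Some (cs, es)) None"
          by (auto simp: list_all2_Cons1)
        have inh: "(lhd Z T)\<^sup>*\<^sup>* (enc Z cs) (TC D [t'])"
          using sub_rule(1) s C ts' by simp
        obtain es where es_Z: "Z \<notin> set es" and es: "TC D [t'] = enc Z es"
          using lhd_rtranclp_enc_imp_enc[OF ct inh cs_Z] by blast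
        from ds_Z Cons have "D \<noteq> Z" by auto
        with es obtain es' where es': "es = D # es'" "t' = enc Z es'"
          by (cases es) auto
        have "mstep Z T (Some (cs, D # ds')) (Some (ds', es'))"
          using inh es_Z es es' by (intro mstep.move) auto
        moreover have "(mstep Z T)\<^sup>*\<^sup>* (Some (ds', es')) None"
          using IH ds_Z Cons es_Z es' by auto
        ultimately show ?thesis
          unfolding Cons by (rule converse_rtranclp_into_rtranclp)
      qed
    qed
  qed
  with assms show ?thesis by blast
qed

theorem mainTheorem3:
  fixes Z :: 'c and T :: "('c ty \<times> 'c ty) set" and cs ds :: "'c list"
  assumes "class_table Z T"
    and "Z \<notin> set cs" and "Z \<notin> set ds"
  shows "sub Z T (enc Z cs) (enc Z ds) \<longleftrightarrow> (mstep Z T)\<^sup>*\<^sup>* (Some (cs, ds)) None"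
  using sub_imp_halting_run[OF assms(1) _ assms(2,3)] halting_run_imp_sub[of Z T cs ds] by blast

end
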